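(* Let $X$ be a measure space, let $\Phi_1,\Phi_2,\Phi_3$ be Young functions and $u_1,u_2,u_3:X\to(0,\infty)$ weights such that $\Phi_1^{-1}(t)\Phi_2^{-1}(t)\le\Phi_3^{-1}(t)$ for every $t>0$ and $u_3(x)\le u_1(x)u_2(x)$ for every $x\in X$. If $f_1\in wL_{\Phi_1}^{u_1}(X)$ and $f_2\in wL_{\Phi_2}^{u_2}(X)$, then $f_1f_2\in wL_{\Phi_3}^{u_3}(X)$ and $$\|f_1f_2\|_{wL_{\Phi_3}^{u_3}(X)}\le 2\|f_1\|_{wL_{\Phi_1}^{u_1}(X)}\|f_2\|_{wL_{\Phi_2}^{u_2}(X)}.$$
   Context: A Young function is a function $\Phi:[0,\infty)\to[0,\infty)$ that is convex, left-continuous, satisfies $\lim_{t\to0}\Phi(t)=0=\Phi(0)$ and $\lim_{t\to\infty}\Phi(t)=\infty$. Its generalized inverse is $\Phi^{-1}(s):=\inf\{r\ge0:\Phi(r)>s\}$. For a Young function $\Phi$ and a weight $u:X\to(0,\infty)$, the weighted weak Orlicz space $wL_\Phi^u(X)$ is the set of measurable $f:X\to\mathbb{R}$ with $\|f\|_{wL_\Phi^u(X)} := \inf\{ b>0 : \sup_{t>0} \Phi(t)\,|\{x\in X : |u(x)f(x)|/b > t\}| \le 1\} < \infty$, where $|\cdot|$ denotes the measure on $X$. *)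

theory Defs
  imports "HOL-Analysis.Analysis"
begin

text \<open>Young function on [0,\<infinity>), represented as a real function; only its values on [0,\<infinity>) matter.\<close>
definition young_function :: "(real \<Rightarrow> real) \<Rightarrow> bool" where
  "young_function \<Phi> \<longleftrightarrow>
     (\<forall>t\<ge>0. \<Phi> t \<ge> 0) \<and>
     convex_on {0..} \<Phi> \<and>
     (\<forall>t>0. (\<Phi> \<longlongrightarrow> \<Phi> t) (at_left t)) \<and>
     \<Phi> 0 = 0 \<and> (\<Phi> \<longlongrightarrow> 0) (at_right 0) \<and>
     filterlim \<Phi> at_top at_top"

definition young_inv :: "(real \<Rightarrow> real) \<Rightarrow> real \<Rightarrow> real" where
  "young_inv \<Phi> s = Inf {r. r \<ge> 0 \<and> \<Phi> r > s}"

definition wOrlicz_admissible ::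
  "'a measure \<Rightarrow> (real \<Rightarrow> real) \<Rightarrow> ('a \<Rightarrow> real) \<Rightarrow> ('a \<Rightarrow> real) \<Rightarrow> real set" where
  "wOrlicz_admissible M \<Phi> u f =
     {b. b > 0 \<and> (\<forall>t>0. ennreal (\<Phi> t) *
          emeasure M {x \<in> space M. \<bar>u x * f x\<bar> / b > t} \<le> 1)}"

definition wOrlicz_norm ::
  "'a measure \<Rightarrow> (real \<Rightarrow> real) \<Rightarrow> ('a \<Rightarrow> real) \<Rightarrow> ('a \<Rightarrow> real) \<Rightarrow> real" where
  "wOrlicz_norm M \<Phi> u f = Inf (wOrlicz_admissible M \<Phi> u f)"

definition wOrlicz_space ::
  "'a measure \<Rightarrow> (real \<Rightarrow> real) \<Rightarrow> ('a \<Rightarrow> real) \<Rightarrow> ('a \<Rightarrow> real) set" where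
  "wOrlicz_space M \<Phi> u =
     {f. f \<in> borel_measurable M \<and> wOrlicz_admissible M \<Phi> u f \<noteq> {}}"

end

theory Submission imports Defs begin

text \<open>If \<open>b\<^sub>1, b\<^sub>2\<close> are admissible for \<open>f\<^sub>1, f\<^sub>2\<close>, put \<open>w = \<Phi>\<^sub>3(2t)\<close> and
  \<open>r\<^sub>i = \<Phi>\<^sub>i\<^sup>-\<^sup>1(w)\<close>. Since \<open>r\<^sub>1 r\<^sub>2 \<le> \<Phi>\<^sub>3\<^sup>-\<^sup>1(w) \<le> 2t\<close>, wherever
  \<open>u\<^sub>3 |f\<^sub>1 f\<^sub>2| / (2 b\<^sub>1 b\<^sub>2)\<close> exceeds \<open>t\<close>, one of the normalised factors
  \<open>u\<^sub>i |f\<^sub>i| / b\<^sub>i\<close> exceeds \<open>r\<^sub>i\<close>; as \<open>\<Phi>\<^sub>i > w\<close> just above \<open>r\<^sub>i\<close>, each of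
  these level sets has measure at most \<open>1/w\<close>. Convexity gives \<open>w \<ge> 2 \<Phi>\<^sub>3(t)\<close>, so
  \<open>2 b\<^sub>1 b\<^sub>2\<close> is admissible for \<open>f\<^sub>1 f\<^sub>2\<close>, and the norm bound follows by taking
  infima.\<close>

lemma young_function_le_ratio:
  assumes "young_function \<Phi>" "0 \<le> s" "s \<le> r" "0 < r"
  shows "\<Phi> s \<le> (s / r) * \<Phi> r"
proof -
  have "convex_on {0..} \<Phi>" "\<Phi> 0 = 0"
    using assms(1) by (auto simp: young_function_def)
  moreover have "(1 - s/r) *\<^sub>R 0 + (s/r) *\<^sub>R r = s"
    using assms by simp
  ultimately show ?thesis
    using convex_onD[of "{0..}" \<Phi> "s/r" 0 r] assms by auto
qed

lemma young_function_mono: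
  assumes "young_function \<Phi>" "0 \<le> s" "s \<le> r"
  shows "\<Phi> s \<le> \<Phi> r"
proof (cases "s = r")
  case False
  then have "0 < r" using assms by auto
  have "\<Phi> s \<le> (s / r) * \<Phi> r"
    using young_function_le_ratio assms \<open>0 < r\<close> by blast
  also have "\<dots> \<le> \<Phi> r"
    using assms \<open>0 < r\<close> by (intro mult_left_le_one_le) (auto simp: young_function_def)
  finally show ?thesis .
qed simp

lemma young_function_strict_mono:
  assumes "young_function \<Phi>" "0 < s" "s < r" "0 < \<Phi> s"
  shows "\<Phi> s < \<Phi> r"
proof -
  have "r * \<Phi> s \<le> s * \<Phi> r"
    using young_function_le_ratio[OF assms(1), of s r] assms by (simp add: field_simps)
  moreover have "s * \<Phi> s < r * \<Phi> s"
    using assms by simp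
  ultimately have "s * \<Phi> s < s * \<Phi> r"
    by linarith
  then show ?thesis
    using assms(2) by simp
qed

lemma young_function_double:
  assumes "young_function \<Phi>" "0 < t"
  shows "2 * \<Phi> t \<le> \<Phi> (2 * t)"
  using young_function_le_ratio[OF assms(1), of t "2 * t"] assms by simp

lemma young_function_exceeds:
  assumes "young_function \<Phi>"
  shows "\<exists>r\<ge>0. w < \<Phi> r"
proof -
  have "eventually (\<lambda>r. w < \<Phi> r) at_top"
    using assms by (simp add: young_function_def filterlim_at_top_dense)
  then obtain N where "\<forall>r\<ge>N. w < \<Phi> r"
    by (auto simp: eventually_at_top_linorder)
  then show ?thesis
    by (intro exI[of _ "max N 0"]) simp
qed

lemma young_inv_nonneg:
  assumes "young_function \<Phi>"
  shows "0 \<le> young_inv \<Phi> w"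
  unfolding young_inv_def using young_function_exceeds[OF assms, of w]
  by (intro cInf_greatest) auto

lemma young_function_above_young_inv:
  assumes "young_function \<Phi>" "0 < e"
  shows "w < \<Phi> (young_inv \<Phi> w + e)"
proof -
  let ?S = "{r. 0 \<le> r \<and> w < \<Phi> r}"
  have "?S \<noteq> {}"
    using young_function_exceeds[OF assms(1), of w] by auto
  moreover have "Inf ?S < young_inv \<Phi> w + e"
    using assms(2) by (simp add: young_inv_def)
  ultimately have "\<exists>r\<in>?S. r < young_inv \<Phi> w + e"
    by (rule cInf_lessD)
  then obtain r where r: "r \<in> ?S" "r < young_inv \<Phi> w + e" ..
  have "\<Phi> r \<le> \<Phi> (young_inv \<Phi> w + e)"
    using young_function_mono[OF assms(1), of r "young_inv \<Phi> w + e"] r by auto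
  with r show ?thesis by simp
qed

lemma young_inv_young_function_le:
  assumes "young_function \<Phi>" "0 < t" "0 < \<Phi> t"
  shows "young_inv \<Phi> (\<Phi> t) \<le> t"
proof (rule field_le_epsilon)
  fix e :: real
  assume "0 < e"
  then have "t + e \<in> {r. 0 \<le> r \<and> \<Phi> t < \<Phi> r}"
    using young_function_strict_mono[OF assms(1,2), of "t + e"] assms by simp
  then show "young_inv \<Phi> (\<Phi> t) \<le> t + e"
    unfolding young_inv_def by (intro cInf_lower) (auto intro: bdd_belowI[of _ 0])
qed

lemma emeasure_superlevel_le_inverse:
  fixes g :: "'a \<Rightarrow> real"
  assumes g: "g \<in> borel_measurable M"
    and weak: "\<And>t. 0 < t \<Longrightarrow> ennreal (\<Phi> t) * emeasure M {x \<in> space M. t < g x} \<le> 1"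
    and "0 \<le> r" "0 < w" and above: "\<And>e. 0 < e \<Longrightarrow> w < \<Phi> (r + e)"
  shows "emeasure M {x \<in> space M. r < g x} \<le> ennreal (1 / w)"
proof -
  define A where "A n = {x \<in> space M. r + 1 / Suc n < g x}" for n :: nat
  have inc: "incseq A"
  proof (rule incseq_SucI)
    fix n
    have "1 / real (Suc (Suc n)) \<le> 1 / Suc n"
      by (simp add: frac_le)
    then show "A n \<subseteq> A (Suc n)"
      by (force simp: A_def)
  qed
  have sets: "range A \<subseteq> sets M"
    using g by (auto simp: A_def)
  have union: "(\<Union>n. A n) = {x \<in> space M. r < g x}"
  proof (intro set_eqI iffI)
    fix x
    assume "x \<in> {x \<in> space M. r < g x}"
    then obtain n where "1 / Suc n < g x - r" "x \<in> space M"
      by (metis (mono_tags) diff_gt_0_iff_gt mem_Collect_eq nat_approx_posE)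
    then have "x \<in> A n"
      by (simp add: A_def)
    then show "x \<in> (\<Union>n. A n)" by blast
  next
    fix x
    assume "x \<in> (\<Union>n. A n)"
    then obtain n where x: "x \<in> space M" "r + 1 / Suc n < g x"
      by (auto simp: A_def)
    have "r < r + 1 / Suc n"
      by simp
    also note x(2)
    finally show "x \<in> {x \<in> space M. r < g x}"
      using x(1) by simp
  qed
  have "emeasure M {x \<in> space M. r < g x} = (SUP n. emeasure M (A n))"
    using SUP_emeasure_incseq[OF sets inc] union by simp
  also have "\<dots> \<le> ennreal (1 / w)"
  proof (rule SUP_least)
    fix n
    have "ennreal w * emeasure M (A n) \<le> ennreal (\<Phi> (r + 1 / Suc n)) * emeasure M (A n)"
      using above[of "1 / Suc n"] by (auto intro!: mult_right_mono ennreal_leI)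
    also have "\<dots> \<le> 1"
      unfolding A_def using \<open>0 \<le> r\<close> by (intro weak) (simp add: add_nonneg_pos)
    finally have "ennreal w * emeasure M (A n) \<le> 1" .
    have "emeasure M (A n) = ennreal (1 / w) * (ennreal w * emeasure M (A n))"
      using \<open>0 < w\<close> by (simp add: mult.assoc[symmetric] ennreal_mult[symmetric])
    also have "\<dots> \<le> ennreal (1 / w)"
      using mult_left_mono[OF \<open>ennreal w * emeasure M (A n) \<le> 1\<close>] by simp
    finally show "emeasure M (A n) \<le> ennreal (1 / w)" .
  qed
  finally show ?thesis .
qed

lemma wOrlicz_admissible_pos:
  "b \<in> wOrlicz_admissible M \<Phi> u f \<Longrightarrow> 0 < b"
  by (simp add: wOrlicz_admissible_def)

lemma bdd_below_wOrlicz_admissible: "bdd_below (wOrlicz_admissible M \<Phi> u f)"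
  by (rule bdd_belowI[of _ 0]) (auto dest: wOrlicz_admissible_pos)

lemma emeasure_wOrlicz_superlevel_le:
  assumes "young_function \<Phi>" "u \<in> borel_measurable M" "f \<in> borel_measurable M"
    and "b \<in> wOrlicz_admissible M \<Phi> u f" "0 < w"
  shows "emeasure M {x \<in> space M. young_inv \<Phi> w < \<bar>u x * f x\<bar> / b} \<le> ennreal (1 / w)"
  using assms
  by (intro emeasure_superlevel_le_inverse)
    (auto simp: wOrlicz_admissible_def young_inv_nonneg young_function_above_young_inv)

lemma weighted_product_exceeds:
  fixes u v w f g a b r q s :: real
  assumes "0 < w" "w \<le> u * v" "0 < a" "0 < b" "0 \<le> r" "0 \<le> q" "r * q \<le> s"
    and "s < \<bar>w * (f * g)\<bar> / (a * b)"
  shows "r < \<bar>u * f\<bar> / a \<or> q < \<bar>v * g\<bar> / b"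
proof (rule ccontr)
  assume "\<not> ?thesis"
  then have le_f: "\<bar>u * f\<bar> \<le> r * a" and le_g: "\<bar>v * g\<bar> \<le> q * b"
    using assms(3,4) by (simp_all add: not_less pos_divide_le_eq)
  have "\<bar>w * (f * g)\<bar> = w * (\<bar>f\<bar> * \<bar>g\<bar>)"
    using assms(1) by (simp add: abs_mult)
  also have "\<dots> \<le> \<bar>u * v\<bar> * (\<bar>f\<bar> * \<bar>g\<bar>)"
    using assms(2) by (intro mult_right_mono) auto
  also have "\<dots> = \<bar>u * f\<bar> * \<bar>v * g\<bar>"
    by (simp add: abs_mult)
  also have "\<dots> \<le> (r * a) * (q * b)"
    using le_f le_g by (intro mult_mono) auto
  also have "\<dots> = (r * q) * (a * b)"
    by simp
  also have "\<dots> \<le> s * (a * b)"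
    using assms(3,4,7) by (intro mult_right_mono) auto
  finally show False
    using assms(3,4,8) by (simp add: pos_less_divide_eq)
qed

lemma emeasure_wOrlicz_product_superlevel_le:
  assumes y1: "young_function \<Phi>1" and y2: "young_function \<Phi>2"
    and meas: "u1 \<in> borel_measurable M" "u2 \<in> borel_measurable M"
      "f1 \<in> borel_measurable M" "f2 \<in> borel_measurable M"
    and pos: "\<forall>x\<in>space M. 0 < u3 x" and weight: "\<forall>x\<in>space M. u3 x \<le> u1 x * u2 x"
    and b1: "b1 \<in> wOrlicz_admissible M \<Phi>1 u1 f1" and b2: "b2 \<in> wOrlicz_admissible M \<Phi>2 u2 f2"
    and "0 < w" and level: "young_inv \<Phi>1 w * young_inv \<Phi>2 w \<le> s"
  shows "emeasure M {x \<in> space M. s < \<bar>u3 x * (f1 x * f2 x)\<bar> / (b1 * b2)} \<le> ennreal (2 / w)"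
proof -
  define S1 where "S1 = {x \<in> space M. young_inv \<Phi>1 w < \<bar>u1 x * f1 x\<bar> / b1}"
  define S2 where "S2 = {x \<in> space M. young_inv \<Phi>2 w < \<bar>u2 x * f2 x\<bar> / b2}"
  have "0 < b1" "0 < b2"
    using b1 b2 by (auto dest: wOrlicz_admissible_pos)
  have "{x \<in> space M. s < \<bar>u3 x * (f1 x * f2 x)\<bar> / (b1 * b2)} \<subseteq> S1 \<union> S2"
  proof
    fix x
    assume x: "x \<in> {x \<in> space M. s < \<bar>u3 x * (f1 x * f2 x)\<bar> / (b1 * b2)}"
    have "young_inv \<Phi>1 w < \<bar>u1 x * f1 x\<bar> / b1 \<or> young_inv \<Phi>2 w < \<bar>u2 x * f2 x\<bar> / b2"
      using x pos weight \<open>0 < b1\<close> \<open>0 < b2\<close> level young_inv_nonneg[OF y1] young_inv_nonneg[OF y2]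
      by (intro weighted_product_exceeds[where w = "u3 x" and s = s]) simp_all
    then show "x \<in> S1 \<union> S2"
      using x by (simp add: S1_def S2_def)
  qed
  moreover have "S1 \<in> sets M" "S2 \<in> sets M"
    using meas by (auto simp: S1_def S2_def)
  ultimately have "emeasure M {x \<in> space M. s < \<bar>u3 x * (f1 x * f2 x)\<bar> / (b1 * b2)}
      \<le> emeasure M S1 + emeasure M S2"
    by (meson emeasure_mono emeasure_subadditive order.trans sets.Un)
  also have "\<dots> \<le> ennreal (1 / w) + ennreal (1 / w)"
    unfolding S1_def S2_def
    using emeasure_wOrlicz_superlevel_le meas y1 y2 b1 b2 \<open>0 < w\<close> by (intro add_mono)
  also have "\<dots> = ennreal (2 / w)"
    using \<open>0 < w\<close> by (simp add: ennreal_plus[symmetric])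
  finally show ?thesis .
qed

lemma wOrlicz_admissible_mult:
  assumes y1: "young_function \<Phi>1" and y2: "young_function \<Phi>2" and y3: "young_function \<Phi>3"
    and meas: "u1 \<in> borel_measurable M" "u2 \<in> borel_measurable M"
      "f1 \<in> borel_measurable M" "f2 \<in> borel_measurable M"
    and pos: "\<forall>x\<in>space M. 0 < u3 x"
    and inv: "\<forall>t>0. young_inv \<Phi>1 t * young_inv \<Phi>2 t \<le> young_inv \<Phi>3 t"
    and weight: "\<forall>x\<in>space M. u3 x \<le> u1 x * u2 x"
    and b1: "b1 \<in> wOrlicz_admissible M \<Phi>1 u1 f1" and b2: "b2 \<in> wOrlicz_admissible M \<Phi>2 u2 f2"
  shows "2 * b1 * b2 \<in> wOrlicz_admissible M \<Phi>3 u3 (\<lambda>x. f1 x * f2 x)"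
proof -
  have "0 < b1" "0 < b2"
    using b1 b2 by (auto dest: wOrlicz_admissible_pos)
  have "ennreal (\<Phi>3 t) * emeasure M {x \<in> space M. t < \<bar>u3 x * (f1 x * f2 x)\<bar> / (2 * b1 * b2)} \<le> 1"
    if "0 < t" for t
  proof (cases "0 < \<Phi>3 t")
    case False
    then have "\<Phi>3 t = 0"
      using y3 \<open>0 < t\<close> by (auto simp: young_function_def intro: antisym)
    then show ?thesis by simp
  next
    case True
    define w where "w = \<Phi>3 (2 * t)"
    have "2 * \<Phi>3 t \<le> w"
      unfolding w_def using young_function_double[OF y3 \<open>0 < t\<close>] .
    with True have "0 < w" by linarith
    have "young_inv \<Phi>1 w * young_inv \<Phi>2 w \<le> young_inv \<Phi>3 w"
      using inv \<open>0 < w\<close> by simp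
    also have "\<dots> \<le> 2 * t"
      unfolding w_def using young_inv_young_function_le[OF y3] \<open>0 < t\<close> \<open>0 < w\<close> w_def by simp
    finally have "emeasure M {x \<in> space M. 2 * t < \<bar>u3 x * (f1 x * f2 x)\<bar> / (b1 * b2)}
        \<le> ennreal (2 / w)"
      by (rule emeasure_wOrlicz_product_superlevel_le[OF y1 y2 meas pos weight b1 b2 \<open>0 < w\<close>])
    moreover have "t < a / (2 * b1 * b2) \<longleftrightarrow> 2 * t < a / (b1 * b2)" for a
      using \<open>0 < b1\<close> \<open>0 < b2\<close> by (simp add: pos_less_divide_eq mult_ac)
    ultimately have "ennreal (\<Phi>3 t) * emeasure M {x \<in> space M. t < \<bar>u3 x * (f1 x * f2 x)\<bar> / (2 * b1 * b2)}
        \<le> ennreal (\<Phi>3 t) * ennreal (2 / w)"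
      by (intro mult_left_mono) simp_all
    also have "\<dots> = ennreal (\<Phi>3 t * (2 / w))"
      using True \<open>0 < w\<close> by (subst ennreal_mult) auto
    also have "\<dots> \<le> 1"
      using \<open>2 * \<Phi>3 t \<le> w\<close> \<open>0 < w\<close> by (simp add: field_simps)
    finally show ?thesis .
  qed
  then show ?thesis
    using \<open>0 < b1\<close> \<open>0 < b2\<close> by (simp add: wOrlicz_admissible_def)
qed

lemma cInf_le_mult_cInf:
  fixes A B C :: "real set" and c :: real
  assumes "A \<noteq> {}" "B \<noteq> {}" "\<forall>a\<in>A. 0 \<le> a" "\<forall>b\<in>B. 0 \<le> b" "bdd_below C" "0 \<le> c"
    and prod: "\<And>a b. a \<in> A \<Longrightarrow> b \<in> B \<Longrightarrow> c * a * b \<in> C"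
  shows "Inf C \<le> c * Inf A * Inf B"
proof -
  have "0 \<le> Inf A" "0 \<le> Inf B"
    using assms by (auto intro: cInf_greatest)
  have bound_A: "Inf C \<le> c * Inf A * b" if "b \<in> B" for b
  proof (cases "c * b = 0")
    case True
    then show ?thesis
      using prod[OF _ that] \<open>A \<noteq> {}\<close> \<open>bdd_below C\<close> by (force intro: cInf_lower)
  next
    case False
    then have "0 < c * b" using assms that by (simp add: less_le)
    have "Inf C / (c * b) \<le> Inf A"
    proof (rule cInf_greatest[OF \<open>A \<noteq> {}\<close>])
      fix a assume "a \<in> A"
      then have "Inf C \<le> c * a * b"
        using prod[OF _ that] \<open>bdd_below C\<close> by (intro cInf_lower)
      then show "Inf C / (c * b) \<le> a"
        using \<open>0 < c * b\<close> by (simp add: divide_le_eq mult_ac)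
    qed
    then show ?thesis
      using \<open>0 < c * b\<close> by (simp add: divide_le_eq mult_ac)
  qed
  show ?thesis
  proof (cases "c * Inf A = 0")
    case True
    then show ?thesis
      using bound_A \<open>B \<noteq> {}\<close> by force
  next
    case False
    then have "0 < c * Inf A" using assms \<open>0 \<le> Inf A\<close> by (simp add: less_le)
    have "Inf C / (c * Inf A) \<le> Inf B"
      using bound_A \<open>0 < c * Inf A\<close>
      by (intro cInf_greatest[OF \<open>B \<noteq> {}\<close>]) (simp add: divide_le_eq mult_ac)
    then show ?thesis
      using \<open>0 < c * Inf A\<close> by (simp add: divide_le_eq mult_ac)
  qed
qed

theorem theorem3p1:
  fixes M :: "'a measure"
    and \<Phi>1 \<Phi>2 \<Phi>3 :: "real \<Rightarrow> real"
    and u1 u2 u3 f1 f2 :: "'a \<Rightarrow> real"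
  assumes "young_function \<Phi>1" and "young_function \<Phi>2" and "young_function \<Phi>3"
    and "u1 \<in> borel_measurable M" and "u2 \<in> borel_measurable M" and "u3 \<in> borel_measurable M"
    and "\<forall>x\<in>space M. u1 x > 0" and "\<forall>x\<in>space M. u2 x > 0" and "\<forall>x\<in>space M. u3 x > 0"
    and "\<forall>t>0. young_inv \<Phi>1 t * young_inv \<Phi>2 t \<le> young_inv \<Phi>3 t"
    and "\<forall>x\<in>space M. u3 x \<le> u1 x * u2 x"
    and "f1 \<in> wOrlicz_space M \<Phi>1 u1" and "f2 \<in> wOrlicz_space M \<Phi>2 u2"
  shows "(\<lambda>x. f1 x * f2 x) \<in> wOrlicz_space M \<Phi>3 u3 \<and>
         wOrlicz_norm M \<Phi>3 u3 (\<lambda>x. f1 x * f2 x)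
           \<le> 2 * wOrlicz_norm M \<Phi>1 u1 f1 * wOrlicz_norm M \<Phi>2 u2 f2"
proof -
  let ?A1 = "wOrlicz_admissible M \<Phi>1 u1 f1"
  let ?A2 = "wOrlicz_admissible M \<Phi>2 u2 f2"
  let ?A3 = "wOrlicz_admissible M \<Phi>3 u3 (\<lambda>x. f1 x * f2 x)"
  have f1: "f1 \<in> borel_measurable M" "?A1 \<noteq> {}"
    and f2: "f2 \<in> borel_measurable M" "?A2 \<noteq> {}"
    using assms(12,13) by (auto simp: wOrlicz_space_def)
  have admissible: "2 * b1 * b2 \<in> ?A3" if "b1 \<in> ?A1" "b2 \<in> ?A2" for b1 b2
    using wOrlicz_admissible_mult[OF assms(1-5)] f1 f2 assms(9-11) that by blast
  have "(\<lambda>x. f1 x * f2 x) \<in> borel_measurable M"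
    using f1 f2 by measurable
  moreover have "?A3 \<noteq> {}"
    using f1 f2 admissible by blast
  moreover have "Inf ?A3 \<le> 2 * Inf ?A1 * Inf ?A2"
    by (intro cInf_le_mult_cInf bdd_below_wOrlicz_admissible admissible f1(2) f2(2))
      (auto dest: wOrlicz_admissible_pos)
  ultimately show ?thesis
    by (simp add: wOrlicz_space_def wOrlicz_norm_def)
qed

end
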